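(* Let $x\cdot y$ be a PA-structure on $(\mathfrak{g},\mathfrak{n})$, where $\mathfrak{g}$ is abelian and $\mathfrak{n}$ is $2$-step nilpotent. Then for all $p,q,x\in V$ with $\{x,p\}=\{x,q\}=0$ we have $x\cdot\{p,q\}=0$.
   Context: Let $K$ be a field of characteristic zero and $V$ a finite-dimensional vector space over $K$. Let $\mathfrak{g}=(V,[\,,])$ and $\mathfrak{n}=(V,\{\,,\})$ be two Lie algebra structures on $V$. A post-Lie algebra structure (PA-structure) on the pair $(\mathfrak{g},\mathfrak{n})$ is a $K$-bilinear product $x\cdot y$ on $V$ satisfying, for all $x,y,z\in V$: (i) $x\cdot y-y\cdot x=[x,y]-\{x,y\}$; (ii) $[x,y]\cdot z=x\cdot(y\cdot z)-y\cdot(x\cdot z)$; (iii) $x\cdot\{y,z\}=\{x\cdot y,z\}+\{y,x\cdot z\}$. A Lie algebra is called $2$-step nilpotent here if it is nilpotent of class at most $2$. *)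

theory Defs
  imports Complex_Main
begin

text \<open>A K-vector space V is modelled by a type 'v :: ab_group_add with a scalar
multiplication scale :: 'k \<Rightarrow> 'v \<Rightarrow> 'v satisfying the library locale
vector_space; finite dimensionality via finite_dimensional_vector_space.\<close>

definition bilinear_map :: "('k \<Rightarrow> 'v::ab_group_add \<Rightarrow> 'v) \<Rightarrow> ('v \<Rightarrow> 'v \<Rightarrow> 'v) \<Rightarrow> bool" where
  "bilinear_map scale f \<longleftrightarrow>
     (\<forall>x y z. f (x + y) z = f x z + f y z) \<and>
     (\<forall>x y z. f x (y + z) = f x y + f x z) \<and>
     (\<forall>a x y. f (scale a x) y = scale a (f x y)) \<and>
     (\<forall>a x y. f x (scale a y) = scale a (f x y))"

definition lie_bracket :: "('k \<Rightarrow> 'v::ab_group_add \<Rightarrow> 'v) \<Rightarrow> ('v \<Rightarrow> 'v \<Rightarrow> 'v) \<Rightarrow> bool" where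
  "lie_bracket scale br \<longleftrightarrow>
     bilinear_map scale br \<and>
     (\<forall>x. br x x = 0) \<and>
     (\<forall>x y z. br x (br y z) + br y (br z x) + br z (br x y) = 0)"

definition abelian_lie :: "('v \<Rightarrow> 'v \<Rightarrow> 'v::zero) \<Rightarrow> bool" where
  "abelian_lie br \<longleftrightarrow> (\<forall>x y. br x y = 0)"

definition two_step_nilpotent :: "('v \<Rightarrow> 'v \<Rightarrow> 'v::zero) \<Rightarrow> bool" where
  "two_step_nilpotent br \<longleftrightarrow> (\<forall>x y z. br (br x y) z = 0)"

text \<open>Post-Lie algebra structure on the pair (g, n), g = (V, lb), n = (V, nb).\<close>
definition PA_structure ::
  "('k \<Rightarrow> 'v::ab_group_add \<Rightarrow> 'v) \<Rightarrow> ('v \<Rightarrow> 'v \<Rightarrow> 'v) \<Rightarrow> ('v \<Rightarrow> 'v \<Rightarrow> 'v) \<Rightarrow> ('v \<Rightarrow> 'v \<Rightarrow> 'v) \<Rightarrow> bool" where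
  "PA_structure scale lb nb pr \<longleftrightarrow>
     bilinear_map scale pr \<and>
     (\<forall>x y. pr x y - pr y x = lb x y - nb x y) \<and>
     (\<forall>x y z. pr (lb x y) z = pr x (pr y z) - pr y (pr x z)) \<and>
     (\<forall>x y z. pr x (nb y z) = nb (pr x y) z + nb y (pr x z))"

end

theory Submission
  imports Defs
begin

text \<open>Since g is abelian, axiom (i) reads \<open>y\<cdot>x = x\<cdot>y + {x,y}\<close>, and n being
2-step nilpotent, every bracket \<open>{_,{_,_}}\<close> vanishes. Applying the derivation property (iii)
of \<open>L(w)\<close> to a commuting pair \<open>{y,z} = 0\<close> and swapping the factors therefore gives the exchange
rule \<open>{y\<cdot>w, z} = {z\<cdot>w, y}\<close>. Expanding \<open>x\<cdot>{p,q}\<close> by (iii) and using the exchange rule for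
the pairs \<open>(x,p)\<close> and \<open>(x,q)\<close> turns it into \<open>{q\<cdot>p - p\<cdot>q, x} = {{p,q}, x} = 0\<close>.\<close>

lemma bilinear_map_additive_left:
  assumes "bilinear_map scale f"
  shows "additive (\<lambda>x. f x y)"
  using assms by unfold_locales (simp add: bilinear_map_def)

lemma bilinear_map_additive_right:
  assumes "bilinear_map scale f"
  shows "additive (\<lambda>y. f x y)"
  using assms by unfold_locales (simp add: bilinear_map_def)

lemma lie_bracket_antisym:
  assumes "lie_bracket scale br"
  shows "br x y = - br y x"
proof -
  have bil: "bilinear_map scale br" and alt: "\<And>a. br a a = 0"
    using assms by (auto simp: lie_bracket_def)
  have "0 = br (x + y) (x + y)" by (rule alt[symmetric])
  also have "\<dots> = br x x + br y x + (br x y + br y y)"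
    by (simp only: additive.add[OF bilinear_map_additive_left[OF bil]]
        additive.add[OF bilinear_map_additive_right[OF bil]])
  also have "\<dots> = br x y + br y x"
    by (simp add: alt)
  finally show ?thesis by (simp add: eq_neg_iff_add_eq_0)
qed

locale abelian_two_step_PA =
  fixes scale :: "'k \<Rightarrow> 'v::ab_group_add \<Rightarrow> 'v" and lb nb pr :: "'v \<Rightarrow> 'v \<Rightarrow> 'v"
  assumes lie_nb: "lie_bracket scale nb"
    and PA: "PA_structure scale lb nb pr"
    and abelian_lb: "abelian_lie lb"
    and nilpotent_nb: "two_step_nilpotent nb"
begin

lemma bilinear_nb: "bilinear_map scale nb"
  using lie_nb by (simp add: lie_bracket_def)

lemma bilinear_pr: "bilinear_map scale pr"
  using PA by (simp add: PA_structure_def)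

lemma nb_antisym: "nb x y = - nb y x"
  using lie_nb by (rule lie_bracket_antisym)

lemma nb_nb_left: "nb (nb x y) z = 0"
  using nilpotent_nb by (simp add: two_step_nilpotent_def)

lemma nb_nb_right: "nb z (nb x y) = 0"
  using nb_antisym nb_nb_left by (metis neg_equal_0_iff_equal)

lemma pr_derivation: "pr x (nb y z) = nb (pr x y) z + nb y (pr x z)"
  using PA by (simp add: PA_structure_def)

lemma pr_commute: "pr y x = pr x y + nb x y"
proof -
  have "pr x y - pr y x = - nb x y"
    using PA abelian_lb by (simp add: PA_structure_def abelian_lie_def)
  then show ?thesis by (simp add: algebra_simps)
qed

lemma nb_pr_exchange:
  assumes "nb y z = 0"
  shows "nb (pr y w) z = nb (pr z w) y"
proof -
  have "0 = pr w (nb y z)"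
    using assms additive.zero[OF bilinear_map_additive_right[OF bilinear_pr]] by simp
  also have "\<dots> = nb (pr w y) z + nb y (pr w z)"
    by (rule pr_derivation)
  also have "\<dots> = nb (pr y w + nb y w) z + nb y (pr z w + nb z w)"
    using pr_commute[of w y] pr_commute[of w z] by simp
  also have "\<dots> = nb (pr y w) z + nb y (pr z w)"
    using bilinear_nb by (simp add: bilinear_map_def nb_nb_left nb_nb_right)
  also have "\<dots> = nb (pr y w) z - nb (pr z w) y"
    using nb_antisym[of y "pr z w"] by simp
  finally show ?thesis by simp
qed

lemma pr_nb_of_commuting:
  assumes "nb x p = 0" and "nb x q = 0"
  shows "pr x (nb p q) = 0"
proof -
  have "pr x (nb p q) = nb (pr x p) q - nb (pr x q) p"
    using pr_derivation nb_antisym[of p "pr x q"] by simp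
  also have "\<dots> = nb (pr q p) x - nb (pr p q) x"
    using nb_pr_exchange[OF assms(1)] nb_pr_exchange[OF assms(2)] by simp
  also have "\<dots> = nb (pr q p - pr p q) x"
    by (rule additive.diff[OF bilinear_map_additive_left[OF bilinear_nb], symmetric])
  also have "pr q p - pr p q = nb p q"
    using pr_commute[of q p] by simp
  finally show ?thesis by (simp add: nb_nb_left)
qed

end

theorem lemma4p10:
  fixes scale :: "'k::field_char_0 \<Rightarrow> 'v::ab_group_add \<Rightarrow> 'v"
    and basis :: "'v set"
    and lb nb pr :: "'v \<Rightarrow> 'v \<Rightarrow> 'v"
    and p q x :: 'v
  assumes "finite_dimensional_vector_space scale basis"
    and "lie_bracket scale lb"
    and "lie_bracket scale nb"
    and "PA_structure scale lb nb pr"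
    and "abelian_lie lb"
    and "two_step_nilpotent nb"
    and "nb x p = 0"
    and "nb x q = 0"
  shows "pr x (nb p q) = 0"
proof -
  interpret abelian_two_step_PA scale lb nb pr
    using assms(3-6) by unfold_locales
  show ?thesis using assms(7,8) by (rule pr_nb_of_commuting)
qed

end
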